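(* Let $\mu=g\,dx$ be a finite Borel measure on $\mathbb{R}^d$ that is absolutely continuous with respect to Lebesgue measure, with density $g\ge 0$. If $\nu$ is a frame measure for $\mu$ with frame bounds $A,B>0$, then $$\frac{B}{A}\geq\frac{\operatorname{ess\,sup}_\mu(g)}{\operatorname{ess\,inf}_\mu(g)}.$$ In particular, if $\operatorname{ess\,sup}_\mu(g)=\infty$ or $\operatorname{ess\,inf}_\mu(g)=0$, then $\mu$ admits no frame measure.
   Context: A Borel measure $\nu$ on $\mathbb{R}^d$ is a frame measure for $\mu$ with frame bounds $A,B>0$ if $A\|f\|_{L^2(\mu)}^2\le \|\widehat{f\,d\mu}\|_{L^2(\nu)}^2\le B\|f\|_{L^2(\mu)}^2$ for all $f\in L^2(\mu)$, where $\widehat{f\,d\mu}(t)=\int f(x)e^{-2\pi i t\cdot x}\,d\mu(x)$. For a nonnegative Borel function $f$: $\operatorname{ess\,sup}_\mu(f)=\inf\{M\in[0,\infty]: f\le M\ \mu\text{-a.e.}\}$ and $\operatorname{ess\,inf}_\mu(f)=\sup\{m\ge 0: f\ge m\ \mu\text{-a.e.}\}$. *)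

theory Defs
  imports "HOL-Analysis.Analysis"
begin

definition fourier_meas :: "'a::euclidean_space measure \<Rightarrow> ('a \<Rightarrow> complex) \<Rightarrow> 'a \<Rightarrow> complex" where
  "fourier_meas \<mu> f t = (LINT x|\<mu>. f x * cis (- 2 * pi * (t \<bullet> x)))"

definition L2sq :: "'a measure \<Rightarrow> ('a \<Rightarrow> complex) \<Rightarrow> ennreal" where
  "L2sq M f = (\<integral>\<^sup>+ x. ennreal ((cmod (f x))\<^sup>2) \<partial>M)"

definition frame_measure :: "'a::euclidean_space measure \<Rightarrow> 'a measure \<Rightarrow> real \<Rightarrow> real \<Rightarrow> bool" where
  "frame_measure \<mu> \<nu> A B \<longleftrightarrow> sets \<nu> = sets borel \<and> A > 0 \<and> B > 0 \<and>
     (\<forall>f. f \<in> borel_measurable \<mu> \<and> L2sq \<mu> f < \<infinity> \<longrightarrow>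
        ennreal A * L2sq \<mu> f \<le> L2sq \<nu> (fourier_meas \<mu> f) \<and>
        L2sq \<nu> (fourier_meas \<mu> f) \<le> ennreal B * L2sq \<mu> f)"

definition ess_sup_mu :: "'a measure \<Rightarrow> ('a \<Rightarrow> ennreal) \<Rightarrow> ennreal" where
  "ess_sup_mu M f = Inf {m. AE x in M. f x \<le> m}"

definition ess_inf_mu :: "'a measure \<Rightarrow> ('a \<Rightarrow> ennreal) \<Rightarrow> ennreal" where
  "ess_inf_mu M f = Sup {m. AE x in M. m \<le> f x}"

end

theory Submission
  imports Defs
begin

(* For a set F on which
   g > 0, the test function 1_F/g lies in L2(\<mu>) with norm\<^sup>2 equal to the integral of 1_F/g, and
   its Fourier transform (1_F/g) g dx is just the Fourier transform of 1_F. Translating F does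
   not change the modulus of that transform, so the frame inequalities give
   A \<integral>_{F+t} 1/g \<le> B \<integral>_F 1/g. If g \<ge> r on F and g \<le> m on F+t, this yields A r \<le> B m.
   Such F and t exist whenever {g > r} and {g < m} have positive \<mu>-measure, because two sets
   of positive Lebesgue measure overlap in positive measure after some translation (Fubini).
   Letting r increase to ess sup g and m decrease to ess inf g gives the theorem. *)

lemma emeasure_pos_UN:
  assumes "range X \<subseteq> sets M" and "emeasure M (\<Union>n. X n) > 0"
  shows "\<exists>n::nat. emeasure M (X n) > 0"
  using emeasure_UN_eq_0[of M X] assms by (metis not_gr_zero)

lemma emeasure_lborel_translate:
  fixes E :: "'a::euclidean_space set"
  assumes [measurable]: "E \<in> sets borel"
  shows "emeasure lborel ((+) c -` E) = emeasure lborel E"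
proof -
  have "emeasure lborel E = emeasure (distr lborel borel ((+) c)) E"
    by (simp add: lborel_distr_plus)
  also have "\<dots> = emeasure lborel ((+) c -` E)"
    by (subst emeasure_distr) auto
  finally show ?thesis ..
qed

lemma integral_lborel_translate:
  fixes h :: "'a::euclidean_space \<Rightarrow> 'b::{banach, second_countable_topology}"
  assumes [measurable]: "h \<in> borel_measurable borel"
  shows "(LINT x|lborel. h (c + x)) = (LINT y|lborel. h y)"
proof -
  have "(LINT y|lborel. h y) = (LINT y|distr lborel borel ((+) c). h y)"
    by (simp add: lborel_distr_plus)
  also have "\<dots> = (LINT x|lborel. h (c + x))"
    by (rule integral_distr) auto
  finally show ?thesis ..
qed

(* Two sets of positive Lebesgue measure overlap in positive measure after a suitable
  translation: integrating the overlap measure over all translations gives the product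
  of the two measures (Fubini), so it cannot vanish for every translation. *)
lemma emeasure_lborel_translate_overlap:
  fixes E1 E2 :: "'a::euclidean_space set"
  assumes [measurable]: "E1 \<in> sets borel" "E2 \<in> sets borel"
    and pos: "emeasure lborel E1 > 0" "emeasure lborel E2 > 0"
  shows "\<exists>t. emeasure lborel {x\<in>E1. x + t \<in> E2} > 0"
proof (rule ccontr)
  assume "\<not> ?thesis"
  then have null: "emeasure lborel {x\<in>E1. x + t \<in> E2} = 0" for t
    by (simp add: not_less)
  let ?h = "\<lambda>x t. indicator E1 x * indicator E2 (x + t) :: ennreal"
  have "(\<integral>\<^sup>+t. \<integral>\<^sup>+x. ?h x t \<partial>lborel \<partial>lborel) = (\<integral>\<^sup>+x. \<integral>\<^sup>+t. ?h x t \<partial>lborel \<partial>(lborel::'a measure))"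
    by (rule lborel_pair.Fubini') measurable
  moreover have "(\<integral>\<^sup>+x. ?h x t \<partial>lborel) = emeasure lborel {x\<in>E1. x + t \<in> E2}" for t
  proof -
    have "?h x t = indicator {x\<in>E1. x + t \<in> E2} x" for x
      by (auto simp: indicator_def)
    then show ?thesis by simp
  qed
  moreover have "(\<integral>\<^sup>+t. ?h x t \<partial>lborel) = emeasure lborel E2 * indicator E1 x" for x
  proof -
    have "(\<integral>\<^sup>+t. ?h x t \<partial>lborel) = indicator E1 x * (\<integral>\<^sup>+t. indicator ((+) x -` E2) t \<partial>lborel)"
      by (subst nn_integral_cmult[symmetric]) (auto simp: indicator_def)
    moreover have "(+) x -` E2 \<in> sets borel"
      by (simp add: vimage_def)
    ultimately show ?thesis
      by (simp add: emeasure_lborel_translate mult.commute)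
  qed
  ultimately have "emeasure lborel E2 * emeasure lborel E1 = 0"
    by (simp add: null nn_integral_cmult_indicator)
  then show False
    using pos by auto
qed

lemma emeasure_lborel_pos_bounded_part:
  fixes E :: "'a::euclidean_space set"
  assumes "E \<in> sets borel" and "emeasure lborel E > 0"
  shows "\<exists>n::nat. emeasure lborel (E \<inter> ball 0 (real n)) > 0"
proof (rule emeasure_pos_UN)
  have "\<exists>n::nat. norm x < real n" for x :: 'a
    by (rule reals_Archimedean2)
  then have "(\<Union>n::nat. E \<inter> ball 0 (real n)) = E"
    by (fastforce simp: dist_norm)
  then show "emeasure lborel (\<Union>n::nat. E \<inter> ball 0 (real n)) > 0"
    using assms by simp
qed (use assms in auto)

lemma emeasure_density_pos_imp_pos:
  assumes "f \<in> borel_measurable M" "X \<in> sets M" and "emeasure (density M f) X > 0"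
  shows "emeasure M X > 0"
  using assms by (metis emeasure_density not_gr_zero nn_integral_null_set null_setsI)

(* A set of positive measure for the density measure g dM stays of positive measure after
  removing the points where g is small, since the density measure ignores the zero set of g. *)
lemma density_level_set_pos:
  fixes g :: "'a \<Rightarrow> real"
  assumes [measurable]: "g \<in> borel_measurable M" "X \<in> sets M"
    and pos: "0 < emeasure (density M (\<lambda>x. ennreal (g x))) X"
  shows "\<exists>\<epsilon>>0. 0 < emeasure (density M (\<lambda>x. ennreal (g x))) {x\<in>X. \<epsilon> \<le> g x}"
proof -
  let ?\<mu> = "density M (\<lambda>x. ennreal (g x))"
  let ?L = "\<lambda>n::nat. {x\<in>X. 1 / Suc n \<le> g x}"
  have null: "emeasure ?\<mu> {x\<in>X. g x \<le> 0} = 0"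
  proof -
    have "emeasure ?\<mu> {x\<in>X. g x \<le> 0} = (\<integral>\<^sup>+x. ennreal (g x) * indicator {x\<in>X. g x \<le> 0} x \<partial>M)"
      by (rule emeasure_density) auto
    also have "\<dots> = (\<integral>\<^sup>+x. 0 \<partial>M)"
      by (intro nn_integral_cong) (auto simp: indicator_def ennreal_eq_0_iff)
    finally show ?thesis
      by simp
  qed
  have "X \<subseteq> {x\<in>X. g x \<le> 0} \<union> (\<Union>n. ?L n)"
  proof
    fix x assume "x \<in> X"
    moreover have "\<exists>n. 1 / Suc n \<le> g x" if "0 < g x"
      using reals_Archimedean[OF that] by (auto simp: inverse_eq_divide intro: less_imp_le)
    ultimately show "x \<in> {x\<in>X. g x \<le> 0} \<union> (\<Union>n. ?L n)"
      by (cases "g x \<le> 0") auto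
  qed
  then have "emeasure ?\<mu> X \<le> emeasure ?\<mu> ({x\<in>X. g x \<le> 0} \<union> (\<Union>n. ?L n))"
    by (intro emeasure_mono) auto
  also have "\<dots> \<le> emeasure ?\<mu> {x\<in>X. g x \<le> 0} + emeasure ?\<mu> (\<Union>n. ?L n)"
    by (intro emeasure_subadditive) auto
  finally have "0 < emeasure ?\<mu> (\<Union>n. ?L n)"
    using pos null by simp
  moreover have "?L n \<in> sets ?\<mu>" for n
    by measurable
  then have "range ?L \<subseteq> sets ?\<mu>"
    by blast
  ultimately obtain n where "0 < emeasure ?\<mu> (?L n)"
    using emeasure_pos_UN[of ?L ?\<mu>] by blast
  then show ?thesis
    by (intro exI[of _ "1 / Suc n"]) auto
qed

lemma emeasure_above_pos_of_ess_sup: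
  assumes [measurable]: "g \<in> borel_measurable M" and "0 \<le> r"
    and "ennreal r < ess_sup_mu M (\<lambda>x. ennreal (g x))"
  shows "emeasure M {x\<in>space M. g x > r} > 0"
proof (rule ccontr)
  assume "\<not> ?thesis"
  then have "AE x in M. ennreal (g x) \<le> ennreal r"
    by (subst AE_iff_measurable[of "{x\<in>space M. g x > r}"]) (auto simp: assms(2))
  then have "ess_sup_mu M (\<lambda>x. ennreal (g x)) \<le> ennreal r"
    unfolding ess_sup_mu_def by (intro Inf_lower) simp
  then show False
    using assms(3) by simp
qed

lemma ess_sup_ge_of_emeasure_above:
  assumes [measurable]: "g \<in> borel_measurable M" and "emeasure M {x\<in>space M. g x > r} > 0"
  shows "ennreal r \<le> ess_sup_mu M (\<lambda>x. ennreal (g x))"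
  unfolding ess_sup_mu_def
proof (rule Inf_greatest)
  fix b assume "b \<in> {b. AE x in M. ennreal (g x) \<le> b}"
  then have ae: "AE x in M. ennreal (g x) \<le> b" by simp
  show "ennreal r \<le> b"
  proof (rule ccontr)
    assume b: "\<not> ennreal r \<le> b"
    from ae have "AE x in M. g x \<le> r"
      by eventually_elim (use b in \<open>meson ennreal_leI linorder_not_le less_imp_le order_trans\<close>)
    then show False
      using assms(2) by (subst (asm) AE_iff_measurable[of "{x\<in>space M. g x > r}"]) auto
  qed
qed

lemma emeasure_below_pos_of_ess_inf:
  assumes [measurable]: "g \<in> borel_measurable M" and "\<And>x. g x \<ge> 0"
    and "ess_inf_mu M (\<lambda>x. ennreal (g x)) < ennreal m"
  shows "emeasure M {x\<in>space M. g x < m} > 0"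
proof (rule ccontr)
  assume "\<not> ?thesis"
  then have "AE x in M. ennreal m \<le> ennreal (g x)"
    by (subst AE_iff_measurable[of "{x\<in>space M. g x < m}"]) (auto simp: assms(2) not_le)
  then have "ennreal m \<le> ess_inf_mu M (\<lambda>x. ennreal (g x))"
    unfolding ess_inf_mu_def by (intro Sup_upper) simp
  then show False
    using assms(3) by simp
qed

lemma ess_inf_le_of_emeasure_below:
  assumes [measurable]: "g \<in> borel_measurable M" and "emeasure M {x\<in>space M. g x < m} > 0"
  shows "ess_inf_mu M (\<lambda>x. ennreal (g x)) \<le> ennreal m"
  unfolding ess_inf_mu_def
proof (rule Sup_least)
  fix b assume "b \<in> {b. AE x in M. b \<le> ennreal (g x)}"
  then have ae: "AE x in M. b \<le> ennreal (g x)" by simp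
  show "b \<le> ennreal m"
  proof (rule ccontr)
    assume b: "\<not> b \<le> ennreal m"
    from ae have "AE x in M. m \<le> g x"
      by eventually_elim (use b in \<open>meson ennreal_leI linorder_not_le less_imp_le order_trans\<close>)
    then show False
      using assms(2) by (subst (asm) AE_iff_measurable[of "{x\<in>space M. g x < m}"]) auto
  qed
qed

lemma ess_sup_ess_inf_null_measure:
  assumes "emeasure M (space M) = 0"
  shows "ess_sup_mu M f = 0" and "ess_inf_mu M f = \<infinity>"
proof -
  have ae: "AE x in M. P x" for P
    using assms by (intro AE_I[of _ _ "space M"]) auto
  have "ess_sup_mu M f \<le> 0"
    unfolding ess_sup_mu_def by (rule Inf_lower) (simp add: ae)
  then show "ess_sup_mu M f = 0"
    by simp
  show "ess_inf_mu M f = \<infinity>"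
    unfolding ess_inf_mu_def using ae by simp
qed

lemma ess_bounds_nonzero_density:
  fixes g :: "'a \<Rightarrow> real"
  assumes [measurable]: "g \<in> borel_measurable M"
    and nonzero: "emeasure (density M (\<lambda>x. ennreal (g x))) (space M) \<noteq> 0"
  shows "0 < ess_sup_mu (density M (\<lambda>x. ennreal (g x))) (\<lambda>x. ennreal (g x))"
    and "ess_inf_mu (density M (\<lambda>x. ennreal (g x))) (\<lambda>x. ennreal (g x)) < \<infinity>"
proof -
  let ?\<mu> = "density M (\<lambda>x. ennreal (g x))"
  obtain \<epsilon> where "0 < \<epsilon>" and "0 < emeasure ?\<mu> {x\<in>space M. \<epsilon> \<le> g x}"
    using density_level_set_pos[of g M "space M"] nonzero by (auto simp: zero_less_iff_neq_zero)
  moreover have "emeasure ?\<mu> {x\<in>space M. \<epsilon> \<le> g x} \<le> emeasure ?\<mu> {x\<in>space ?\<mu>. \<epsilon> / 2 < g x}"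
    using \<open>0 < \<epsilon>\<close> by (intro emeasure_mono) auto
  ultimately have half: "ennreal (\<epsilon> / 2) \<le> ess_sup_mu ?\<mu> (\<lambda>x. ennreal (g x))"
    by (intro ess_sup_ge_of_emeasure_above) auto
  show "0 < ess_sup_mu ?\<mu> (\<lambda>x. ennreal (g x))"
    using less_le_trans[OF _ half] \<open>0 < \<epsilon>\<close> by simp
  let ?L = "\<lambda>n::nat. {x\<in>space ?\<mu>. g x < real n}"
  have "?L n \<in> sets ?\<mu>" for n
    by measurable
  then have "range ?L \<subseteq> sets ?\<mu>"
    by blast
  moreover have "(\<Union>n. ?L n) = space ?\<mu>"
    using reals_Archimedean2 by auto
  ultimately obtain n where "0 < emeasure ?\<mu> (?L n)"
    using emeasure_pos_UN[of ?L ?\<mu>] nonzero by (auto simp: zero_less_iff_neq_zero)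
  then have "ess_inf_mu ?\<mu> (\<lambda>x. ennreal (g x)) \<le> ennreal (real n)"
    by (intro ess_inf_le_of_emeasure_below) auto
  then show "ess_inf_mu ?\<mu> (\<lambda>x. ennreal (g x)) < \<infinity>"
    by (simp add: le_less_trans)
qed

definition indicator_fourier :: "'a::euclidean_space set \<Rightarrow> 'a \<Rightarrow> complex" where
  "indicator_fourier F s = (LINT x|lborel. indicator F x *\<^sub>R cis (- 2 * pi * (s \<bullet> x)))"

lemma borel_measurable_character [measurable]:
  "(\<lambda>x::'a::euclidean_space. cis (- 2 * pi * (s \<bullet> x))) \<in> borel_measurable borel"
  by (intro borel_measurable_continuous_onI continuous_intros)

lemma indicator_fourier_translate:
  fixes F :: "'a::euclidean_space set"
  assumes [measurable]: "F \<in> sets borel"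
  shows "indicator_fourier ((+) (- t) -` F) s = cis (- 2 * pi * (s \<bullet> t)) * indicator_fourier F s"
proof -
  have "(+) (- t) -` F \<in> sets borel"
    by (simp add: vimage_def)
  then have "(\<lambda>y. indicator ((+) (- t) -` F) y *\<^sub>R cis (- 2 * pi * (s \<bullet> y))) \<in> borel_measurable borel"
    by measurable
  from integral_lborel_translate[OF this, of t]
  have "indicator_fourier ((+) (- t) -` F) s
      = (LINT x|lborel. indicator F x *\<^sub>R cis (- 2 * pi * (s \<bullet> (t + x))))"
    unfolding indicator_fourier_def by (simp add: indicator_def)
  also have "\<dots> = (LINT x|lborel. cis (- 2 * pi * (s \<bullet> t)) * (indicator F x *\<^sub>R cis (- 2 * pi * (s \<bullet> x))))"
    by (intro Bochner_Integration.integral_cong)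
       (auto simp: cis_mult algebra_simps scaleR_conv_of_real)
  also have "\<dots> = cis (- 2 * pi * (s \<bullet> t)) * indicator_fourier F s"
    unfolding indicator_fourier_def by (rule integral_mult_right_zero)
  finally show ?thesis .
qed

lemma L2sq_density_reciprocal:
  fixes g :: "'a \<Rightarrow> real"
  assumes [measurable]: "g \<in> borel_measurable M" "F \<in> sets M" and nonneg: "\<And>x. 0 \<le> g x"
  shows "L2sq (density M (\<lambda>x. ennreal (g x))) (\<lambda>x. complex_of_real (indicator F x / g x))
       = (\<integral>\<^sup>+x. ennreal (indicator F x / g x) \<partial>M)"
proof -
  have "ennreal (g x) * ennreal ((cmod (complex_of_real (indicator F x / g x)))\<^sup>2) = ennreal (indicator F x / g x)" for x
  proof (cases "x \<in> F \<and> g x \<noteq> 0")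
    case True
    then have "g x * (1 / g x)\<^sup>2 = 1 / g x"
      by (simp add: power2_eq_square)
    then show ?thesis
      using True nonneg[of x] by (simp add: ennreal_mult''[symmetric] norm_divide)
  qed auto
  then show ?thesis
    unfolding L2sq_def by (simp add: nn_integral_density)
qed

lemma fourier_meas_density_reciprocal:
  fixes g :: "'a::euclidean_space \<Rightarrow> real"
  assumes [measurable]: "g \<in> borel_measurable borel" "F \<in> sets borel"
    and nonneg: "\<And>x. 0 \<le> g x" and pos: "\<And>x. x \<in> F \<Longrightarrow> 0 < g x"
  shows "fourier_meas (density lborel (\<lambda>x. ennreal (g x))) (\<lambda>x. complex_of_real (indicator F x / g x))
       = indicator_fourier F"
proof
  fix s
  have "(\<lambda>x. complex_of_real (indicator F x / g x) * cis (- 2 * pi * (s \<bullet> x))) \<in> borel_measurable lborel"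
    by measurable
  then have "fourier_meas (density lborel (\<lambda>x. ennreal (g x))) (\<lambda>x. complex_of_real (indicator F x / g x)) s
      = (LINT x|lborel. g x *\<^sub>R (complex_of_real (indicator F x / g x) * cis (- 2 * pi * (s \<bullet> x))))"
    unfolding fourier_meas_def by (rule integral_density) (auto simp: nonneg)
  also have "\<dots> = indicator_fourier F s"
    unfolding indicator_fourier_def
    by (intro Bochner_Integration.integral_cong) (auto simp: scaleR_conv_of_real indicator_def dest: pos)
  finally show "fourier_meas (density lborel (\<lambda>x. ennreal (g x))) (\<lambda>x. complex_of_real (indicator F x / g x)) s
      = indicator_fourier F s" .
qed

lemma frame_measure_reciprocal_comparison:
  fixes g :: "'a::euclidean_space \<Rightarrow> real"
  assumes [measurable]: "g \<in> borel_measurable borel" and nonneg: "\<And>x. 0 \<le> g x"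
    and frame: "frame_measure (density lborel (\<lambda>x. ennreal (g x))) \<nu> A B"
    and [measurable]: "F1 \<in> sets borel" "F2 \<in> sets borel"
    and pos: "\<And>x. x \<in> F1 \<Longrightarrow> 0 < g x" "\<And>x. x \<in> F2 \<Longrightarrow> 0 < g x"
    and same_modulus: "\<And>s. cmod (indicator_fourier F2 s) = cmod (indicator_fourier F1 s)"
    and fin: "(\<integral>\<^sup>+x. ennreal (indicator F1 x / g x) \<partial>lborel) < \<infinity>"
      "(\<integral>\<^sup>+x. ennreal (indicator F2 x / g x) \<partial>lborel) < \<infinity>"
  shows "ennreal A * (\<integral>\<^sup>+x. ennreal (indicator F2 x / g x) \<partial>lborel)
       \<le> ennreal B * (\<integral>\<^sup>+x. ennreal (indicator F1 x / g x) \<partial>lborel)"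
proof -
  define \<mu> where "\<mu> = density lborel (\<lambda>x. ennreal (g x))"
  define \<phi> where "\<phi> F x = complex_of_real (indicator F x / g x)" for F x
  have meas: "\<phi> F \<in> borel_measurable \<mu>" if [measurable]: "F \<in> sets borel" for F
    unfolding \<mu>_def \<phi>_def by measurable
  have L2: "L2sq \<mu> (\<phi> F) = (\<integral>\<^sup>+x. ennreal (indicator F x / g x) \<partial>lborel)" if "F \<in> sets borel" for F
    unfolding \<mu>_def \<phi>_def using that by (intro L2sq_density_reciprocal) (auto simp: nonneg)
  have FT: "fourier_meas \<mu> (\<phi> F) = indicator_fourier F"
    if "F \<in> sets borel" "\<And>x. x \<in> F \<Longrightarrow> 0 < g x" for F
    unfolding \<mu>_def \<phi>_def using that by (intro fourier_meas_density_reciprocal) (auto simp: nonneg)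
  have frame_ineq: "ennreal A * L2sq \<mu> (\<phi> F) \<le> L2sq \<nu> (fourier_meas \<mu> (\<phi> F))"
    "L2sq \<nu> (fourier_meas \<mu> (\<phi> F)) \<le> ennreal B * L2sq \<mu> (\<phi> F)"
    if "F \<in> sets borel" "L2sq \<mu> (\<phi> F) < \<infinity>" for F
    using frame meas[OF that(1)] that(2) unfolding frame_measure_def \<mu>_def[symmetric] by blast+
  have "L2sq \<nu> (fourier_meas \<mu> (\<phi> F2)) = L2sq \<nu> (fourier_meas \<mu> (\<phi> F1))"
    using pos by (simp add: FT L2sq_def same_modulus)
  then show ?thesis
    using frame_ineq(1)[of F2] frame_ineq(2)[of F1] fin by (simp add: L2)
qed

lemma nn_integral_reciprocal_upper:
  assumes "F \<in> sets M" "0 < a" "\<And>x. x \<in> F \<Longrightarrow> a \<le> h x"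
  shows "(\<integral>\<^sup>+x. ennreal (indicator F x / h x) \<partial>M) \<le> ennreal (1 / a) * emeasure M F"
proof -
  have "(\<integral>\<^sup>+x. ennreal (indicator F x / h x) \<partial>M) \<le> (\<integral>\<^sup>+x. ennreal (1 / a) * indicator F x \<partial>M)"
    using assms(2,3) by (intro nn_integral_mono) (auto simp: indicator_def intro!: ennreal_leI frac_le)
  also have "\<dots> = ennreal (1 / a) * emeasure M F"
    using assms(1) by (rule nn_integral_cmult_indicator)
  finally show ?thesis .
qed

lemma nn_integral_reciprocal_lower:
  assumes "F \<in> sets M" "\<And>x. x \<in> F \<Longrightarrow> 0 < h x \<and> h x \<le> b"
  shows "ennreal (1 / b) * emeasure M F \<le> (\<integral>\<^sup>+x. ennreal (indicator F x / h x) \<partial>M)"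
proof -
  have "ennreal (1 / b) * emeasure M F = (\<integral>\<^sup>+x. ennreal (1 / b) * indicator F x \<partial>M)"
    using assms(1) by (rule nn_integral_cmult_indicator[symmetric])
  also have "\<dots> \<le> (\<integral>\<^sup>+x. ennreal (indicator F x / h x) \<partial>M)"
    using assms(2) by (intro nn_integral_mono) (auto simp: indicator_def intro!: ennreal_leI frac_le)
  finally show ?thesis .
qed

(* Apply the previous comparison to F and
  F + t and estimate both integrals of 1/g by the measure of F. *)
lemma frame_translate_bound:
  fixes g :: "'a::euclidean_space \<Rightarrow> real"
  assumes [measurable]: "g \<in> borel_measurable borel" and nonneg: "\<And>x. 0 \<le> g x"
    and frame: "frame_measure (density lborel (\<lambda>x. ennreal (g x))) \<nu> A B"
    and [measurable]: "F \<in> sets borel"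
    and F_pos: "0 < emeasure lborel F" and F_fin: "emeasure lborel F < \<infinity>"
    and "0 < r" and lower: "\<And>x. x \<in> F \<Longrightarrow> r \<le> g x"
    and "0 < \<epsilon>" and shifted: "\<And>x. x \<in> F \<Longrightarrow> \<epsilon> \<le> g (t + x) \<and> g (t + x) \<le> m"
  shows "A * r \<le> B * m"
proof -
  define F' where "F' = (+) (- t) -` F"
  have [measurable]: "F' \<in> sets borel"
    by (simp add: F'_def vimage_def)
  obtain c where c: "emeasure lborel F = ennreal c" "0 < c"
    using F_pos F_fin by (cases "emeasure lborel F") auto
  have F'_measure: "emeasure lborel F' = ennreal c"
    unfolding F'_def using c by (simp add: emeasure_lborel_translate)
  have F'_bounds: "\<epsilon> \<le> g y \<and> g y \<le> m" if "y \<in> F'" for y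
    using shifted[of "- t + y"] that by (simp add: F'_def)
  have "F \<noteq> {}"
    using F_pos by auto
  then have "0 < m"
    using shifted \<open>0 < \<epsilon>\<close> by fastforce
  have AB: "0 < A" "0 < B"
    using frame by (auto simp: frame_measure_def)
  have upper: "(\<integral>\<^sup>+x. ennreal (indicator F x / g x) \<partial>lborel) \<le> ennreal (1 / r) * ennreal c"
    using nn_integral_reciprocal_upper[of F lborel r g] \<open>0 < r\<close> lower c by simp
  have upper': "(\<integral>\<^sup>+x. ennreal (indicator F' x / g x) \<partial>lborel) \<le> ennreal (1 / \<epsilon>) * ennreal c"
    using nn_integral_reciprocal_upper[of F' lborel \<epsilon> g] \<open>0 < \<epsilon>\<close> F'_bounds F'_measure by simp
  have lower': "ennreal (1 / m) * ennreal c \<le> (\<integral>\<^sup>+x. ennreal (indicator F' x / g x) \<partial>lborel)"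
    using nn_integral_reciprocal_lower[of F' lborel g m] \<open>0 < \<epsilon>\<close> F'_bounds F'_measure
    by (simp add: less_le_trans)
  have "ennreal A * (\<integral>\<^sup>+x. ennreal (indicator F' x / g x) \<partial>lborel)
      \<le> ennreal B * (\<integral>\<^sup>+x. ennreal (indicator F x / g x) \<partial>lborel)"
  proof (rule frame_measure_reciprocal_comparison[OF _ nonneg frame])
    show "cmod (indicator_fourier F' s) = cmod (indicator_fourier F s)" for s
      unfolding F'_def by (simp add: indicator_fourier_translate norm_mult)
    show "(\<integral>\<^sup>+x. ennreal (indicator F x / g x) \<partial>lborel) < \<infinity>"
      using upper by (simp add: le_less_trans ennreal_mult_less_top)
    show "(\<integral>\<^sup>+x. ennreal (indicator F' x / g x) \<partial>lborel) < \<infinity>"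
      using upper' by (simp add: le_less_trans ennreal_mult_less_top)
  qed (use lower \<open>0 < r\<close> F'_bounds \<open>0 < \<epsilon>\<close> in \<open>auto intro: less_le_trans\<close>)
  then have "ennreal A * (ennreal (1 / m) * ennreal c) \<le> ennreal B * (ennreal (1 / r) * ennreal c)"
    using lower' upper by (meson mult_left_mono order_trans zero_le)
  then have "A * (c / m) \<le> B * (c / r)"
    using AB c \<open>0 < m\<close> \<open>0 < r\<close> by (simp add: ennreal_mult''[symmetric] ennreal_mult[symmetric])
  then show ?thesis
    using AB c \<open>0 < m\<close> \<open>0 < r\<close> by (simp add: field_simps)
qed

(* If {g > r} and {g < m} both have positive \<mu>-measure, then A r \<le> B m: a bounded piece of
  {g > r} and a translate of a piece of {g < m} on which g is bounded away from 0 overlap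
  in positive measure, which is exactly the situation of the previous lemma. *)
lemma frame_level_sets_bound:
  fixes g :: "'a::euclidean_space \<Rightarrow> real"
  assumes g_meas [measurable]: "g \<in> borel_measurable borel" and nonneg: "\<And>x. 0 \<le> g x"
    and frame: "frame_measure (density lborel (\<lambda>x. ennreal (g x))) \<nu> A B"
    and "0 < r"
    and above: "0 < emeasure (density lborel (\<lambda>x. ennreal (g x))) {x. r < g x}"
    and below: "0 < emeasure (density lborel (\<lambda>x. ennreal (g x))) {x. g x < m}"
  shows "A * r \<le> B * m"
proof -
  have "0 < emeasure lborel {x. r < g x}"
    by (rule emeasure_density_pos_imp_pos[OF _ _ above]) measurable
  then obtain n :: nat where E1: "0 < emeasure lborel ({x. r < g x} \<inter> ball 0 (real n))"
    using emeasure_lborel_pos_bounded_part[of "{x. r < g x}"] by auto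
  have "g \<in> borel_measurable lborel" "{x. g x < m} \<in> sets lborel"
    by measurable
  from density_level_set_pos[OF this below] obtain \<epsilon> where "0 < \<epsilon>"
    and "0 < emeasure (density lborel (\<lambda>x. ennreal (g x))) {x\<in>{x. g x < m}. \<epsilon> \<le> g x}"
    by blast
  moreover have "(\<lambda>x. ennreal (g x)) \<in> borel_measurable lborel" "{x\<in>{x. g x < m}. \<epsilon> \<le> g x} \<in> sets lborel"
    by measurable
  ultimately have E2: "0 < emeasure lborel {x\<in>{x. g x < m}. \<epsilon> \<le> g x}"
    using emeasure_density_pos_imp_pos by blast
  have "{x. r < g x} \<inter> ball 0 (real n) \<in> sets borel" "{x\<in>{x. g x < m}. \<epsilon> \<le> g x} \<in> sets borel"
    by measurable
  from emeasure_lborel_translate_overlap[OF this E1 E2] obtain t where F_pos: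
    "0 < emeasure lborel {x\<in>{x. r < g x} \<inter> ball 0 (real n). x + t \<in> {x\<in>{x. g x < m}. \<epsilon> \<le> g x}}"
    by blast
  define F where "F = {x\<in>{x. r < g x} \<inter> ball 0 (real n). x + t \<in> {x\<in>{x. g x < m}. \<epsilon> \<le> g x}}"
  have "emeasure lborel F \<le> emeasure lborel (ball (0::'a) (real n))"
    by (intro emeasure_mono) (auto simp: F_def)
  then have F_fin: "emeasure lborel F < \<infinity>"
    using emeasure_lborel_ball_finite by (rule le_less_trans)
  show ?thesis
  proof (rule frame_translate_bound[OF g_meas nonneg frame _ _ F_fin \<open>0 < r\<close> _ \<open>0 < \<epsilon>\<close>])
    show "F \<in> sets borel"
      unfolding F_def by measurable
    show "0 < emeasure lborel F"
      using F_pos unfolding F_def .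
    show "r \<le> g x" if "x \<in> F" for x
      using that by (simp add: F_def)
    show "\<epsilon> \<le> g (t + x) \<and> g (t + x) \<le> m" if "x \<in> F" for x
      using that by (simp add: F_def add.commute)
  qed
qed

lemma ennreal_ratio_from_bounds:
  fixes S I :: ennreal and A B :: real
  assumes AB: "0 < A" "0 < B" and "0 < S" "I < \<infinity>"
    and bound: "\<And>r m. 0 < r \<Longrightarrow> 0 < m \<Longrightarrow> ennreal r < S \<Longrightarrow> I < ennreal m \<Longrightarrow> A * r \<le> B * m"
  shows "S / I \<le> ennreal (B / A) \<and> S \<noteq> \<infinity> \<and> I \<noteq> 0"
proof -
  obtain i where i: "I = ennreal i" "0 \<le> i"
    using \<open>I < \<infinity>\<close> by (cases I) auto
  define m0 where "m0 = i + 1"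
  have m0: "0 < m0" "I < ennreal m0"
    using i by (auto simp: m0_def ennreal_less_iff)
  have S_fin: "S \<noteq> \<infinity>"
  proof
    assume "S = \<infinity>"
    then have "A * (B * m0 / A + 1) \<le> B * m0"
      using bound[of "B * m0 / A + 1" m0] m0 AB by (simp add: add_pos_pos)
    then show False
      using AB by (simp add: algebra_simps)
  qed
  then obtain s where s: "S = ennreal s" "0 < s"
    using \<open>0 < S\<close> by (cases S) auto
  have I_pos: "I \<noteq> 0"
  proof
    assume "I = 0"
    then have "A * (s / 2) \<le> B * (A * s / (4 * B))"
      using bound[of "s / 2" "A * s / (4 * B)"] s AB by (simp add: ennreal_less_iff)
    then show False
      using AB s by (simp add: field_simps)
  qed
  then have "0 < i"
    using i by auto
  have "A * s / B \<le> i"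
  proof (rule dense_ge)
    fix m assume "i < m"
    have "s \<le> B * m / A"
    proof (rule dense_le_bounded[OF \<open>0 < s\<close>])
      fix r assume "0 < r" "r < s"
      then have "A * r \<le> B * m"
        using bound[of r m] s i \<open>i < m\<close> \<open>0 < i\<close> by (simp add: ennreal_less_iff)
      then show "r \<le> B * m / A"
        using AB by (simp add: field_simps)
    qed
    then show "A * s / B \<le> m"
      using AB by (simp add: field_simps)
  qed
  then have "s / i \<le> B / A"
    using AB \<open>0 < i\<close> by (simp add: field_simps)
  then show ?thesis
    using s i \<open>0 < i\<close> S_fin I_pos by (simp add: divide_ennreal ennreal_leI)
qed

(* The main theorem: combine the comparison A r \<le> B m, available for all r below ess sup g and
  m above ess inf g, with the limit argument. *)
theorem theorem2p4:
  fixes g :: "'a::euclidean_space \<Rightarrow> real" and \<nu> :: "'a measure" and A B :: real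
  assumes g_meas: "g \<in> borel_measurable borel"
    and g_nonneg: "\<And>x. g x \<ge> 0"
    and fin: "finite_measure (density lborel (\<lambda>x. ennreal (g x)))"
    and frame: "frame_measure (density lborel (\<lambda>x. ennreal (g x))) \<nu> A B"
  shows "ennreal (B / A) \<ge>
           ess_sup_mu (density lborel (\<lambda>x. ennreal (g x))) (\<lambda>x. ennreal (g x))
         / ess_inf_mu (density lborel (\<lambda>x. ennreal (g x))) (\<lambda>x. ennreal (g x))
         \<and> (ess_sup_mu (density lborel (\<lambda>x. ennreal (g x))) (\<lambda>x. ennreal (g x)) \<noteq> \<infinity>
         \<and> ess_inf_mu (density lborel (\<lambda>x. ennreal (g x))) (\<lambda>x. ennreal (g x)) \<noteq> 0)"
proof -
  note [measurable] = g_meas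
  define \<mu> where "\<mu> = density lborel (\<lambda>x. ennreal (g x))"
  define S where "S = ess_sup_mu \<mu> (\<lambda>x. ennreal (g x))"
  define I where "I = ess_inf_mu \<mu> (\<lambda>x. ennreal (g x))"
  have AB: "0 < A" "0 < B"
    using frame by (auto simp: frame_measure_def)
  have bound: "A * r \<le> B * m" if "0 < r" "0 < m" "ennreal r < S" "I < ennreal m" for r m
    using frame_level_sets_bound[OF g_meas g_nonneg frame \<open>0 < r\<close>]
      emeasure_above_pos_of_ess_sup[of g \<mu> r] emeasure_below_pos_of_ess_inf[of g \<mu> m] that g_nonneg
    by (simp add: \<mu>_def S_def I_def)
  show ?thesis
  proof (cases "emeasure \<mu> (space \<mu>) = 0")
    case True
    then show ?thesis
      using ess_sup_ess_inf_null_measure[OF True] by (simp add: \<mu>_def)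
  next
    case False
    then have "0 < S" "I < \<infinity>"
      using ess_bounds_nonzero_density[of g lborel] by (auto simp: \<mu>_def S_def I_def)
    from ennreal_ratio_from_bounds[OF AB this bound]
    show ?thesis
      by (simp add: \<mu>_def S_def I_def)
  qed
qed

end
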